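(* Let $\lambda\in\mathcal P_\epsilon(N)$ and suppose Case 2 of the Kempken–Spaltenstein algorithm occurs for $\lambda$ at index $i$. Then $\Delta(\lambda^{(i)})=\Delta(\lambda)\setminus\{(i,i+1)\}$. If moreover $(i,i+1)$ is a good 2-step of $\lambda$, then $s(\lambda^{(i)})=s(\lambda)$.
   Context: $\mathcal P_\epsilon(N)$ ($\epsilon=\pm1$) is the set of partitions $\lambda=(\lambda_1\ge\dots\ge\lambda_n\ge1)$ of $N$ in which every part $m$ with $\epsilon(-1)^m=1$ occurs with even multiplicity; conventions $\lambda_0=0$, $\lambda_i=0$ for $i>n$. $s(\lambda)=\sum_{i=1}^n\lfloor(\lambda_i-\lambda_{i+1})/2\rfloor$. A 2-step of $\lambda$ is a pair $(i,i+1)$, $1\le i<n$, with $\epsilon(-1)^{\lambda_i}=\epsilon(-1)^{\lambda_{i+1}}=-1$, $\lambda_{i-1}\ne\lambda_i$, $\lambda_{i+1}\ne\lambda_{i+2}$; $\Delta(\lambda)$ is the set of 2-steps. A 2-step $(i,i+1)$ is bad if ($i>1$ and $\lambda_{i-1}-\lambda_i$ is even) or $\lambda_{i+1}-\lambda_{i+2}$ is even, and good otherwise. Case 2 occurs at $i$ if $(i,i+1)\in\Delta(\lambda)$ and $\lambda_i=\lambda_{i+1}$; then $\lambda^{(i)}=(\lambda_1-2,\dots,\lambda_{i-1}-2,\lambda_i-1,\lambda_{i+1}-1,\lambda_{i+2},\dots,\lambda_n)$ with zero parts discarded, an element of $\mathcal P_\epsilon(N-2i)$. *)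

theory Defs
  imports Main
begin

(* A partition lambda = (lambda_1 >= ... >= lambda_n >= 1) is represented by the list
   [lambda_1, ..., lambda_n].  Parts are 1-indexed; lambda_0 = 0 and lambda_i = 0 for i > n. *)

definition part :: "nat list \<Rightarrow> nat \<Rightarrow> nat" where
  "part xs i = (if 1 \<le> i \<and> i \<le> length xs then xs ! (i - 1) else 0)"

definition is_partition :: "nat list \<Rightarrow> nat \<Rightarrow> bool" where
  "is_partition xs N \<longleftrightarrow> sorted_wrt (\<ge>) xs \<and> (\<forall>x\<in>set xs. x \<ge> 1) \<and> sum_list xs = N"

definition P_eps :: "int \<Rightarrow> nat \<Rightarrow> nat list set" where
  "P_eps eps N = {xs. is_partition xs N \<and>
     (\<forall>m\<in>set xs. eps * (-1) ^ m = 1 \<longrightarrow> even (count_list xs m))}"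

definition s_inv :: "nat list \<Rightarrow> nat" where
  "s_inv xs = (\<Sum>i=1..length xs. (part xs i - part xs (i+1)) div 2)"

definition is_two_step :: "int \<Rightarrow> nat list \<Rightarrow> nat \<Rightarrow> bool" where
  "is_two_step eps xs i \<longleftrightarrow> 1 \<le> i \<and> i < length xs \<and>
     eps * (-1) ^ part xs i = -1 \<and> eps * (-1) ^ part xs (i+1) = -1 \<and>
     part xs (i-1) \<noteq> part xs i \<and> part xs (i+1) \<noteq> part xs (i+2)"

definition Delta :: "int \<Rightarrow> nat list \<Rightarrow> (nat \<times> nat) set" where
  "Delta eps xs = {(i, i+1) | i. is_two_step eps xs i}"

definition bad_two_step :: "int \<Rightarrow> nat list \<Rightarrow> nat \<Rightarrow> bool" where
  "bad_two_step eps xs i \<longleftrightarrow> (i, i+1) \<in> Delta eps xs \<and>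
     ((i > 1 \<and> even (part xs (i-1) - part xs i)) \<or> even (part xs (i+1) - part xs (i+2)))"

definition good_two_step :: "int \<Rightarrow> nat list \<Rightarrow> nat \<Rightarrow> bool" where
  "good_two_step eps xs i \<longleftrightarrow> (i, i+1) \<in> Delta eps xs \<and> \<not> bad_two_step eps xs i"

definition case2 :: "int \<Rightarrow> nat list \<Rightarrow> nat \<Rightarrow> bool" where
  "case2 eps xs i \<longleftrightarrow> (i, i+1) \<in> Delta eps xs \<and> part xs i = part xs (i+1)"

definition lam_case2 :: "nat list \<Rightarrow> nat \<Rightarrow> nat list" where
  "lam_case2 xs i = filter (\<lambda>x. x \<noteq> 0)
     (map (\<lambda>x. x - 2) (take (i - 1) xs) @ [part xs i - 1, part xs (i+1) - 1] @ drop (i + 1) xs)"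

end

(* Write a = \<lambda>_i = \<lambda>_(i+1).  Because (i, i+1) is a 2-step, \<lambda>_(i-1) > a > \<lambda>_(i+2), so lowering
   the parts by 2 left of i, by 1 at i and i+1, and by 0 right of i+1 keeps the partition
   non-increasing: \<lambda>^(i)_j = \<lambda>_j - shift j for every j.  Parts of a 2-step have the parity of a,
   hence differ from a by at least 2.  So lowering by 2 on the left and by 0 on the right creates
   or destroys no 2-step, while the new parts a - 1 have the wrong parity and cannot equal a
   neighbouring part of a 2-step.  For s, only the differences \<lambda>_(i-1) - \<lambda>_i and
   \<lambda>_(i+1) - \<lambda>_(i+2) change, each dropping by 1; their halves are unchanged exactly when
   they are odd, which is what goodness of the 2-step says. *)

theory Submission imports Defs begin

lemma part_Cons: "part (y # zs) j = (if j = 0 then 0 else if j = 1 then y else part zs (j - 1))"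
  by (cases j) (auto simp: part_def nth_Cons split: nat.splits)

lemma part_filter_nonzero:
  assumes "sorted_wrt (\<ge>) (ys :: nat list)"
  shows "part (filter (\<lambda>x. x \<noteq> 0) ys) j = part ys j"
  using assms
proof (induction ys arbitrary: j)
  case (Cons y ys)
  show ?case
  proof (cases "y = 0")
    case True
    with Cons.prems have "\<forall>x\<in>set (y # ys). x = 0" by auto
    then show ?thesis
      using nth_mem[of "j - 1" "y # ys"] by (auto simp: part_def filter_empty_conv)
  qed (use Cons in \<open>simp add: part_Cons\<close>)
qed simp

lemma part_Suc_neq_0_iff:
  "\<forall>x\<in>set xs. x \<noteq> 0 \<Longrightarrow> part xs (j + 1) \<noteq> 0 \<longleftrightarrow> j < length xs"
  by (auto simp: part_def)

lemma part_antimono: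
  assumes "sorted_wrt (\<ge>) xs" "1 \<le> j" "j \<le> k"
  shows "part xs k \<le> part xs j"
  using assms by (cases "j = k") (auto simp: part_def sorted_wrt_iff_nth_less)

lemma s_inv_eq_sum_upto:
  assumes "length xs \<le> n"
  shows "s_inv xs = (\<Sum>j = 1..n. (part xs j - part xs (j + 1)) div 2)"
proof -
  have "(\<Sum>j = length xs + 1..n. (part xs j - part xs (j + 1)) div 2) = 0"
    by (intro sum.neutral) (auto simp: part_def)
  then show ?thesis
    using sum.ub_add_nat[of 1 "length xs" "\<lambda>j. (part xs j - part xs (j + 1)) div 2" "n - length xs"]
      assms by (simp add: s_inv_def)
qed

lemma odd_pred_div_two: "odd (d :: nat) \<Longrightarrow> (d - 1) div 2 = d div 2"
  by (elim oddE) simp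

lemma sign_eq_minus_one_iff:
  "eps = 1 \<or> eps = -1 \<Longrightarrow> eps * (-1 :: int) ^ m = -1 \<longleftrightarrow> (eps = 1 \<longleftrightarrow> odd m)"
  by (auto simp: minus_one_power_iff)

definition case2_shift :: "nat \<Rightarrow> nat \<Rightarrow> nat" where
  "case2_shift i j = (if j < i then 2 else if j \<le> i + 1 then 1 else 0)"

definition case2_unfiltered :: "nat list \<Rightarrow> nat \<Rightarrow> nat list" where
  "case2_unfiltered xs i =
     map (\<lambda>x. x - 2) (take (i - 1) xs) @ [part xs i - 1, part xs (i + 1) - 1] @ drop (i + 1) xs"

lemma lam_case2_eq_filter: "lam_case2 xs i = filter (\<lambda>x. x \<noteq> 0) (case2_unfiltered xs i)"
  by (simp add: lam_case2_def case2_unfiltered_def)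

lemma length_case2_unfiltered:
  "1 \<le> i \<Longrightarrow> i < length xs \<Longrightarrow> length (case2_unfiltered xs i) = length xs"
  by (simp add: case2_unfiltered_def)

lemma nth_case2_unfiltered:
  assumes "1 \<le> i" "i < length xs" "k < length xs"
  shows "case2_unfiltered xs i ! k = xs ! k - case2_shift i (k + 1)"
proof -
  consider "k < i - 1" | "k = i - 1" | "k = i" | "i < k" by linarith
  then show ?thesis
  proof cases
    case 1
    then show ?thesis using assms by (simp add: case2_unfiltered_def case2_shift_def nth_append)
  next
    case 2
    then show ?thesis
      using assms by (simp add: case2_unfiltered_def case2_shift_def nth_append part_def)
  next
    case 3
    then have "k - (i - 1) = Suc 0" using assms by simp
    then show ?thesis
      using 3 assms by (auto simp: case2_unfiltered_def case2_shift_def nth_append part_def)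
  next
    case 4
    then have "k - (i - 1) = Suc (Suc (k - i - 1))" using assms by simp
    then show ?thesis using 4 assms by (auto simp: case2_unfiltered_def case2_shift_def nth_append)
  qed
qed

lemma part_case2_unfiltered:
  assumes "1 \<le> i" "i < length xs"
  shows "part (case2_unfiltered xs i) j = part xs j - case2_shift i j"
  using assms nth_case2_unfiltered[OF assms, of "j - 1"]
  by (auto simp: part_def length_case2_unfiltered)

locale case2_partition =
  fixes eps :: int and xs :: "nat list" and i :: nat
  assumes eps: "eps = 1 \<or> eps = -1"
    and sorted: "sorted_wrt (\<ge>) xs"
    and nonzero: "\<forall>x\<in>set xs. x \<noteq> 0"
    and case2: "case2 eps xs i"
begin

abbreviation a :: nat where "a \<equiv> part xs i"

lemma two_step_i: "is_two_step eps xs i"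
  using case2 by (auto simp: case2_def Delta_def)

lemma i_bounds: "1 \<le> i" "i < length xs"
  using two_step_i by (auto simp: is_two_step_def)

lemma part_Suc_i: "part xs (i + 1) = a"
  using case2 by (simp add: case2_def)

lemma part_eq_a:
  assumes "i \<le> j" "j \<le> i + 1"
  shows "part xs j = a"
proof -
  have "j = i \<or> j = i + 1" using assms by linarith
  then show ?thesis using part_Suc_i by auto
qed

lemma part_pred_i_neq: "part xs (i - 1) \<noteq> a"
  and part_i_plus_2_neq: "part xs (i + 2) \<noteq> a"
  using two_step_i part_Suc_i by (auto simp: is_two_step_def)

lemma a_pos: "1 \<le> a"
proof -
  have "xs ! (i - 1) \<in> set xs" using i_bounds by simp
  then have "xs ! (i - 1) \<noteq> 0" using nonzero by blast
  then show ?thesis using i_bounds by (simp add: part_def)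
qed

lemma sign_iff_parity: "eps * (-1) ^ m = -1 \<longleftrightarrow> (odd m \<longleftrightarrow> odd a)"
  using two_step_i sign_eq_minus_one_iff[OF eps] by (auto simp: is_two_step_def)

lemma part_before_i_gt: "1 \<le> j \<Longrightarrow> j < i \<Longrightarrow> a < part xs j"
  using part_antimono[OF sorted, of j "i - 1"] part_antimono[OF sorted, of "i - 1" i]
    part_pred_i_neq by linarith

lemma part_after_i_lt: "i + 2 \<le> j \<Longrightarrow> part xs j < a"
  using part_antimono[OF sorted, of "i + 2" j] part_antimono[OF sorted, of "i + 1" "i + 2"]
    part_i_plus_2_neq part_Suc_i by linarith

lemma sorted_case2_unfiltered: "sorted_wrt (\<ge>) (case2_unfiltered xs i)"
proof (unfold sorted_wrt_iff_nth_less, intro allI impI)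
  fix k l assume kl: "k < l" "l < length (case2_unfiltered xs i)"
  have "part xs (l + 1) - case2_shift i (l + 1) \<le> part xs (k + 1) - case2_shift i (k + 1)"
    using part_antimono[OF sorted, of "k + 1" "l + 1"] part_before_i_gt[of "k + 1"]
      part_after_i_lt[of "l + 1"] part_antimono[OF sorted, of i "l + 1"] part_eq_a[of "k + 1"] kl
    by (auto simp: case2_shift_def)
  then show "case2_unfiltered xs i ! l \<le> case2_unfiltered xs i ! k"
    using kl i_bounds by (simp add: nth_case2_unfiltered length_case2_unfiltered part_def)
qed

lemma part_lam_case2: "part (lam_case2 xs i) j = part xs j - case2_shift i j"
  unfolding lam_case2_eq_filter part_filter_nonzero[OF sorted_case2_unfiltered]
  using i_bounds by (rule part_case2_unfiltered)

lemma nonzero_lam_case2: "\<forall>x\<in>set (lam_case2 xs i). x \<noteq> 0"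
  by (auto simp: lam_case2_def)

lemma two_step_iff_parts:
  assumes "\<forall>x\<in>set zs. x \<noteq> 0"
  shows "is_two_step eps zs j \<longleftrightarrow> 1 \<le> j \<and> part zs (j + 1) \<noteq> 0 \<and>
    (odd (part zs j) \<longleftrightarrow> odd a) \<and> (odd (part zs (j + 1)) \<longleftrightarrow> odd a) \<and>
    part zs (j - 1) \<noteq> part zs j \<and> part zs (j + 1) \<noteq> part zs (j + 2)"
  using part_Suc_neq_0_iff[OF assms, of j] by (auto simp: is_two_step_def sign_iff_parity)

lemma parity_gap_above: "(odd x \<longleftrightarrow> odd a) \<Longrightarrow> a < x \<Longrightarrow> a + 2 \<le> x"
  by presburger

lemma parity_gap_below: "(odd x \<longleftrightarrow> odd a) \<Longrightarrow> x < a \<Longrightarrow> x + 2 \<le> a"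
  by presburger

lemma two_step_lam_case2_iff:
  "is_two_step eps (lam_case2 xs i) j \<longleftrightarrow> is_two_step eps xs j \<and> j \<noteq> i"
proof -
  note parts = two_step_iff_parts[OF nonzero_lam_case2] two_step_iff_parts[OF nonzero]
    part_lam_case2 case2_shift_def
  consider "j = 0" | "1 \<le> j" "j + 1 < i" | "j + 1 = i" | "j = i" | "j = i + 1" | "i + 2 \<le> j"
    by linarith
  then show ?thesis
  proof cases
    case 2
    have gt: "a < part xs j" "a < part xs (j + 1)" "part xs (j + 1) \<le> part xs j"
      using part_before_i_gt[of j] part_before_i_gt[of "j + 1"]
        part_antimono[OF sorted, of j "j + 1"] 2 by auto
    have pred: "j = 1 \<or> part xs j \<le> part xs (j - 1)"
      using part_antimono[OF sorted, of "j - 1" j] 2 by (cases "j = 1") auto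
    have next2: "j + 2 < i \<and> a < part xs (j + 2) \<or> j + 2 = i"
      using part_before_i_gt[of "j + 2"] 2 by auto
    show ?thesis
      using 2 gt pred next2 a_pos
        parity_gap_above[of "part xs j"] parity_gap_above[of "part xs (j + 1)"]
      by (auto simp: parts part_def[of xs 0])
  next
    case 6
    have lt: "part xs j < a" "part xs (j + 1) \<le> part xs j" "part xs (j + 2) \<le> part xs (j + 1)"
      using part_after_i_lt[of j] part_antimono[OF sorted, of j "j + 1"]
        part_antimono[OF sorted, of "j + 1" "j + 2"] 6 i_bounds by auto
    have pred: "j = i + 2 \<and> part xs (j - 1) = a \<or> i + 2 < j"
      using 6 part_Suc_i by auto
    show ?thesis using 6 lt pred parity_gap_below[of "part xs j"] by (auto simp: parts)
  qed (use part_Suc_i a_pos in \<open>auto simp: parts\<close>)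
qed

lemma Delta_lam_case2: "Delta eps (lam_case2 xs i) = Delta eps xs - {(i, i + 1)}"
  unfolding Delta_def using two_step_lam_case2_iff by auto

lemma length_lam_case2: "length (lam_case2 xs i) \<le> length xs"
  using i_bounds length_filter_le[of "\<lambda>x. x \<noteq> 0" "case2_unfiltered xs i"]
  by (simp add: lam_case2_eq_filter length_case2_unfiltered)

lemma s_inv_lam_case2:
  assumes "good_two_step eps xs i"
  shows "s_inv (lam_case2 xs i) = s_inv xs"
proof -
  have odd_left: "1 < i \<Longrightarrow> odd (part xs (i - 1) - a)"
    and odd_right: "odd (a - part xs (i + 2))"
    using assms part_Suc_i by (auto simp: good_two_step_def bad_two_step_def)
  have "(part (lam_case2 xs i) j - part (lam_case2 xs i) (j + 1)) div 2
      = (part xs j - part xs (j + 1)) div 2" if "1 \<le> j" for j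
  proof -
    consider "j + 1 < i" | "j + 1 = i" | "j = i" | "j = i + 1" | "i + 2 \<le> j"
      by linarith
    then show ?thesis
    proof cases
      case 1
      have "part xs j - 2 - (part xs (j + 1) - 2) = part xs j - part xs (j + 1)"
        using part_before_i_gt[of "j + 1"] a_pos 1 by simp
      then show ?thesis using 1 by (simp add: part_lam_case2 case2_shift_def)
    next
      case 2
      then have j: "j = i - 1" "1 < i" using that by auto
      have "part xs (i - 1) - 2 - (a - 1) = part xs (i - 1) - a - 1"
        using part_before_i_gt[of "i - 1"] a_pos j by simp
      then show ?thesis using odd_pred_div_two[OF odd_left] j
        by (simp add: part_lam_case2 case2_shift_def)
    next
      case 4
      have "a - 1 - part xs (i + 2) = a - part xs (i + 2) - 1" by simp
      then show ?thesis using odd_pred_div_two[OF odd_right] 4 part_Suc_i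
        by (simp add: part_lam_case2 case2_shift_def)
    qed (use part_Suc_i in \<open>simp_all add: part_lam_case2 case2_shift_def\<close>)
  qed
  then show ?thesis
    using s_inv_eq_sum_upto[OF length_lam_case2] by (simp add: s_inv_def)
qed

end

theorem mainTheorem8:
  fixes eps :: int and N i :: nat and xs :: "nat list"
  assumes "eps = 1 \<or> eps = -1"
    and "xs \<in> P_eps eps N"
    and "case2 eps xs i"
  shows "Delta eps (lam_case2 xs i) = Delta eps xs - {(i, i+1)}
         \<and> (good_two_step eps xs i \<longrightarrow> s_inv (lam_case2 xs i) = s_inv xs)"
proof -
  interpret case2_partition eps xs i
    using assms by unfold_locales (auto simp: P_eps_def is_partition_def)
  show ?thesis using Delta_lam_case2 s_inv_lam_case2 by simp
qed

end
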